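(* Let $n\geq 2$, and let $\varphi$ be a skew morphism of $\mathbb Z_n$ with complexity $c$ and auto-order $m$. Then: (a) $c\geq 0$ and $m\geq 2$; (b) $\varphi$ is the trivial permutation if and only if $c=0$; (c) $\varphi$ is a non-trivial automorphism if and only if $c=1$; (d) $\varphi$ is a proper skew morphism if and only if $c\geq 2$; (e) if $c\geq 1$, then $\varphi'$ has complexity $c-1$ and auto-order $m$; (f) if $c\geq 1$, then $\varphi^{(c-1)}$ is an automorphism of order $m$.
   Context: A skew morphism of a finite group $G$ is a permutation $\varphi$ of $G$ fixing the identity such that for each $a\in G$ there is a non-negative integer $\pi_{\varphi}(a)$ (the power function) with $\varphi(ab)=\varphi(a)\varphi^{\pi_{\varphi}(a)}(b)$ for all $b\in G$; ${\rm ord}(\varphi)$ is the order of $\langle\varphi\rangle$. A skew morphism is proper if it is not a group automorphism. For a skew morphism $\varphi$ of $\mathbb Z_n$, the derived skew morphism $\varphi'$ is the skew morphism of $\mathbb Z_{{\rm ord}(\varphi)}$ given by $\varphi'(a)=\sigma_{\varphi}(a,1)=\sum_{0\leq i\leq a-1}\pi_{\varphi}(\varphi^i(1))$ (taken in $\mathbb Z_{{\rm ord}(\varphi)}$). For $n\geq 2$, since ${\rm ord}(\varphi)<n$, repeatedly taking derived skew morphisms eventually yields a skew morphism of a non-trivial cyclic group that is the trivial permutation (and whose derived skew morphism is the identity of the trivial group). Writing $\varphi^{(0)}=\varphi$, $\varphi^{(1)}=\varphi'$, and in general $\varphi^{(i)}$ for $\varphi$ with the derived-skew-morphism operation applied $i$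 times, the complexity $c$ of $\varphi$ is the number of steps $c$ such that $\varphi^{(c)}$ is this trivial permutation of a non-trivial cyclic group $\mathbb Z_m$, and $m$ is called the auto-order of $\varphi$. *)

theory Defs
  imports Main
begin

text \<open>The cyclic group Z_n is represented by the carrier {0..<n} of naturals with
addition modulo n; a permutation of Z_n is a function nat => nat that is a
bijection of {0..<n} (values outside {0..<n} are irrelevant).\<close>

definition is_skew_morphism :: "nat \<Rightarrow> (nat \<Rightarrow> nat) \<Rightarrow> bool" where
  "is_skew_morphism n \<phi> \<longleftrightarrow> n \<ge> 1 \<and> bij_betw \<phi> {0..<n} {0..<n} \<and> \<phi> 0 = 0 \<and>
     (\<forall>a<n. \<exists>k::nat. \<forall>b<n. \<phi> ((a + b) mod n) = (\<phi> a + (\<phi> ^^ k) b) mod n)"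

definition is_automorphism :: "nat \<Rightarrow> (nat \<Rightarrow> nat) \<Rightarrow> bool" where
  "is_automorphism n \<phi> \<longleftrightarrow> n \<ge> 1 \<and> bij_betw \<phi> {0..<n} {0..<n} \<and>
     (\<forall>a<n. \<forall>b<n. \<phi> ((a + b) mod n) = (\<phi> a + \<phi> b) mod n)"

definition is_trivial_perm :: "nat \<Rightarrow> (nat \<Rightarrow> nat) \<Rightarrow> bool" where
  "is_trivial_perm n \<phi> \<longleftrightarrow> (\<forall>x<n. \<phi> x = x)"

definition is_proper_skew :: "nat \<Rightarrow> (nat \<Rightarrow> nat) \<Rightarrow> bool" where
  "is_proper_skew n \<phi> \<longleftrightarrow> is_skew_morphism n \<phi> \<and> \<not> is_automorphism n \<phi>"

definition skord :: "nat \<Rightarrow> (nat \<Rightarrow> nat) \<Rightarrow> nat" where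
  "skord n \<phi> = (LEAST k. k > 0 \<and> (\<forall>x<n. (\<phi> ^^ k) x = x))"

text \<open>Power function: the least admissible non-negative integer (the power function
is determined modulo ord(phi), so sums of its values taken modulo ord(phi) do not
depend on this choice).\<close>
definition skpow :: "nat \<Rightarrow> (nat \<Rightarrow> nat) \<Rightarrow> nat \<Rightarrow> nat" where
  "skpow n \<phi> a = (LEAST k. \<forall>b<n. \<phi> ((a + b) mod n) = (\<phi> a + (\<phi> ^^ k) b) mod n)"

text \<open>Derived skew morphism, as a pair (ord(phi), phi') with phi' on Z_{ord(phi)}:
phi'(a) = sum_{0<=i<=a-1} pi(phi^i(1)) taken in Z_{ord(phi)}.\<close>
definition derived :: "nat \<times> (nat \<Rightarrow> nat) \<Rightarrow> nat \<times> (nat \<Rightarrow> nat)" where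
  "derived p = (case p of (n, \<phi>) \<Rightarrow>
     (skord n \<phi>, \<lambda>a. (\<Sum>i<a. skpow n \<phi> ((\<phi> ^^ i) (1 mod n))) mod skord n \<phi>))"

definition iter_derived :: "nat \<Rightarrow> nat \<Rightarrow> (nat \<Rightarrow> nat) \<Rightarrow> nat \<times> (nat \<Rightarrow> nat)" where
  "iter_derived i n \<phi> = (derived ^^ i) (n, \<phi>)"

definition complexity :: "nat \<Rightarrow> (nat \<Rightarrow> nat) \<Rightarrow> nat" where
  "complexity n \<phi> = (LEAST c. fst (iter_derived c n \<phi>) \<ge> 2 \<and>
        is_trivial_perm (fst (iter_derived c n \<phi>)) (snd (iter_derived c n \<phi>)))"

definition auto_order :: "nat \<Rightarrow> (nat \<Rightarrow> nat) \<Rightarrow> nat" where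
  "auto_order n \<phi> = fst (iter_derived (complexity n \<phi>) n \<phi>)"

end

theory Submission
  imports Defs "HOL-Combinatorics.Cycles" "HOL-Combinatorics.Orbits" "HOL-Number_Theory.Cong"
begin

(* Iterating the defining identity gives \<phi>^k(a + b) = \<phi>^k(a) + \<phi>^\<sigma>(k,a)(b) with
   \<sigma>(k,a) = sum of \<pi>(\<phi>^i a) over i < k. Since \<phi>^s is determined by s modulo ord \<phi>, this
   makes \<sigma>(k,a) well defined modulo ord \<phi> and a cocycle: \<sigma>(k, x + y) = \<sigma>(\<sigma>(k,x), y).
   Consequently (\<phi>')^k(j) = \<sigma>(j,k) mod ord \<phi>, and \<phi>' is a skew morphism of Z_(ord \<phi>).
   If d is the length of the orbit of 1, then d divides \<sigma>(d,1), so \<phi>^d(1 + b) = 1 + (\<phi>^d)^q(b)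
   and induction on b shows \<phi>^d = id; as the orbit of 1 misses 0, ord \<phi> <= d < n. So the
   derived sequence strictly decreases until it reaches a trivial permutation. Finally \<phi>' is trivial iff \<pi> is
   constantly 1 modulo ord \<phi>, i.e. iff \<phi> is an automorphism: this places the trivial
   permutation at complexity 0 and the other automorphisms at complexity 1. *)

lemma bij_betw_funpow_period:
  assumes "finite A" "bij_betw f A A"
  obtains k where "0 < k" "\<And>x. x \<in> A \<Longrightarrow> (f ^^ k) x = x"
proof -
  define p where "p x = (if x \<in> A then f x else x)" for x
  have "bij_betw p A A"
    using assms(2) by (rule bij_betw_cong[THEN iffD1, rotated]) (simp add: p_def)
  then have "p permutes A"
    by (auto simp: permutes_altdef p_def)
  then obtain k where k: "p ^^ k = id" "0 < k"
    using assms(1) permutation_is_nilpotent permutation_permutes by metis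
  have "(p ^^ j) x = (f ^^ j) x" if "x \<in> A" for j x
    using that bij_betw_apply[OF bij_betw_funpow[OF assms(2)]] by (induction j) (auto simp: p_def)
  then show thesis
    using that k by (metis id_apply)
qed

lemma funpow_fixed_iff_dvd_funpow_dist1:
  assumes "(f ^^ m) x = x" "0 < m"
  shows "(f ^^ k) x = x \<longleftrightarrow> funpow_dist1 f x x dvd k"
proof -
  let ?d = "funpow_dist1 f x x"
  have "(f ^^ k) x = (f ^^ (k mod ?d)) x"
    using funpow_mod_eq[OF funpow_dist1_prop1[OF assms]] by simp
  then show ?thesis
    using funpow_dist1_least[of "k mod ?d" f x x] by (auto simp: dvd_eq_mod_eq_0)
qed

lemma mod_add_left_inj:
  fixes y u v n :: nat
  assumes "u < n" "v < n"
  shows "(y + u) mod n = (y + v) mod n \<longleftrightarrow> u = v"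
  using cong_add_lcancel_nat cong_less_modulus_unique_nat assms by (metis cong_def)

lemma mod_linear_if_additive_at_one:
  fixes f :: "nat \<Rightarrow> nat"
  assumes "0 < n" "f 0 = 0" "\<And>b. b < n \<Longrightarrow> f ((1 + b) mod n) = (f 1 + f b) mod n"
  shows "f (k mod n) = k * f 1 mod n"
proof (induction k)
  case 0
  show ?case using assms(2) by simp
next
  case (Suc k)
  have "Suc k mod n = (1 + k mod n) mod n"
    by (simp add: mod_simps)
  then have "f (Suc k mod n) = (f 1 + f (k mod n)) mod n"
    using assms(1,3) by simp
  also have "\<dots> = Suc k * f 1 mod n"
    using Suc.IH by (simp add: mod_simps)
  finally show ?case .
qed

locale skew_morphism =
  fixes n :: nat and \<phi> :: "nat \<Rightarrow> nat"
  assumes skew: "is_skew_morphism n \<phi>"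
begin

abbreviation ord :: nat where "ord \<equiv> skord n \<phi>"
abbreviation \<pi> :: "nat \<Rightarrow> nat" where "\<pi> \<equiv> skpow n \<phi>"
abbreviation \<psi> :: "nat \<Rightarrow> nat" where "\<psi> \<equiv> snd (derived (n, \<phi>))"

definition \<sigma> :: "nat \<Rightarrow> nat \<Rightarrow> nat" where
  "\<sigma> k x = (\<Sum>i<k. \<pi> ((\<phi> ^^ i) x))"

lemma n_pos: "0 < n"
  using skew by (simp add: is_skew_morphism_def)

lemma bij_betw_carrier: "bij_betw \<phi> {0..<n} {0..<n}"
  using skew by (simp add: is_skew_morphism_def)

lemma map_zero: "\<phi> 0 = 0"
  using skew by (simp add: is_skew_morphism_def)

lemma funpow_less: "x < n \<Longrightarrow> (\<phi> ^^ k) x < n"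
  using bij_betw_apply[OF bij_betw_funpow[OF bij_betw_carrier]] by simp

lemma inj_on_funpow: "inj_on (\<phi> ^^ k) {0..<n}"
  using bij_betw_funpow[OF bij_betw_carrier] by (simp add: bij_betw_def)

lemma funpow_zero: "(\<phi> ^^ k) 0 = 0"
  by (induction k) (simp_all add: map_zero)

lemma skew_rule:
  assumes "a < n" "b < n"
  shows "\<phi> ((a + b) mod n) = (\<phi> a + (\<phi> ^^ \<pi> a) b) mod n"
proof -
  have "\<exists>k. \<forall>b<n. \<phi> ((a + b) mod n) = (\<phi> a + (\<phi> ^^ k) b) mod n"
    using skew assms(1) by (simp add: is_skew_morphism_def)
  from LeastI_ex[OF this] show ?thesis
    using assms(2) unfolding skpow_def by blast
qed

lemma ex_period: "\<exists>k. 0 < k \<and> (\<forall>x<n. (\<phi> ^^ k) x = x)"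
  using bij_betw_funpow_period[OF _ bij_betw_carrier]
  by (metis atLeastLessThan_iff finite_atLeastLessThan zero_le)

lemma ord_pos: "0 < ord"
  using LeastI_ex[OF ex_period] unfolding skord_def by blast

lemma funpow_ord: "x < n \<Longrightarrow> (\<phi> ^^ ord) x = x"
  using LeastI_ex[OF ex_period] unfolding skord_def by blast

lemma ord_le: "0 < k \<Longrightarrow> \<forall>x<n. (\<phi> ^^ k) x = x \<Longrightarrow> ord \<le> k"
  unfolding skord_def by (rule Least_le) simp

lemma funpow_mod_ord: "x < n \<Longrightarrow> (\<phi> ^^ (k mod ord)) x = (\<phi> ^^ k) x"
  by (rule funpow_mod_eq[OF funpow_ord])

lemma funpow_id_iff_ord_dvd: "(\<forall>x<n. (\<phi> ^^ k) x = x) \<longleftrightarrow> ord dvd k"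
proof
  assume "\<forall>x<n. (\<phi> ^^ k) x = x"
  then have "\<forall>x<n. (\<phi> ^^ (k mod ord)) x = x"
    using funpow_mod_ord by simp
  then have "\<not> 0 < k mod ord"
    using ord_le[of "k mod ord"] ord_pos by (meson mod_less_divisor not_le)
  then show "ord dvd k"
    by (simp add: dvd_eq_mod_eq_0)
next
  assume "ord dvd k"
  then show "\<forall>x<n. (\<phi> ^^ k) x = x"
    using funpow_mod_ord[of _ k] by (simp add: dvd_eq_mod_eq_0)
qed

lemma funpow_eq_iff_cong_ord: "(\<forall>x<n. (\<phi> ^^ a) x = (\<phi> ^^ b) x) \<longleftrightarrow> [a = b] (mod ord)"
proof
  assume eq: "\<forall>x<n. (\<phi> ^^ a) x = (\<phi> ^^ b) x"
  define c where "c = ord - b mod ord"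
  have "ord dvd b + c"
  proof -
    have "b + c = ord * (b div ord) + ord"
      unfolding c_def using mod_less_divisor[OF ord_pos, of b] mult_div_mod_eq[of ord b] by linarith
    then show ?thesis by simp
  qed
  then have "\<forall>x<n. (\<phi> ^^ (b + c)) x = x"
    using funpow_id_iff_ord_dvd by blast
  then have "\<forall>x<n. (\<phi> ^^ (a + c)) x = x"
    using eq funpow_less by (simp add: funpow_add)
  then have "ord dvd a + c"
    using funpow_id_iff_ord_dvd by blast
  with \<open>ord dvd b + c\<close> have "[a + c = b + c] (mod ord)"
    by (simp add: cong_def dvd_eq_mod_eq_0)
  then show "[a = b] (mod ord)"
    by (simp add: cong_add_rcancel_nat)
next
  assume "[a = b] (mod ord)"
  then show "\<forall>x<n. (\<phi> ^^ a) x = (\<phi> ^^ b) x"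
    using funpow_mod_ord by (metis cong_def)
qed

lemma funpow_skew:
  assumes "a < n" "b < n"
  shows "(\<phi> ^^ k) ((a + b) mod n) = ((\<phi> ^^ k) a + (\<phi> ^^ \<sigma> k a) b) mod n"
proof (induction k)
  case 0
  show ?case using assms by (simp add: \<sigma>_def)
next
  case (Suc k)
  have "(\<phi> ^^ Suc k) ((a + b) mod n) = \<phi> (((\<phi> ^^ k) a + (\<phi> ^^ \<sigma> k a) b) mod n)"
    using Suc by simp
  also have "\<dots> = (\<phi> ((\<phi> ^^ k) a) + (\<phi> ^^ \<pi> ((\<phi> ^^ k) a)) ((\<phi> ^^ \<sigma> k a) b)) mod n"
    using skew_rule funpow_less assms by blast
  also have "\<dots> = ((\<phi> ^^ Suc k) a + (\<phi> ^^ \<sigma> (Suc k) a) b) mod n"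
    by (simp add: \<sigma>_def funpow_add add.commute)
  finally show ?case .
qed

lemma sigma_add: "\<sigma> (k + l) x = \<sigma> k x + \<sigma> l ((\<phi> ^^ k) x)"
proof (induction l)
  case (Suc l)
  have "(\<phi> ^^ (k + l)) x = (\<phi> ^^ l) ((\<phi> ^^ k) x)"
    by (metis add.commute comp_apply funpow_add)
  with Suc show ?case
    by (simp add: \<sigma>_def)
qed (simp add: \<sigma>_def)

lemma sigma_mult: "(\<phi> ^^ k) x = x \<Longrightarrow> \<sigma> (k * q) x = q * \<sigma> k x"
proof (induction q)
  case 0
  show ?case by (simp add: \<sigma>_def)
next
  case (Suc q)
  then show ?case by (simp add: sigma_add)
qed

lemma ord_dvd_sigma_ord:
  assumes x: "x < n"
  shows "ord dvd \<sigma> ord x"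
proof -
  have "(\<phi> ^^ \<sigma> ord x) b = b" if b: "b < n" for b
  proof -
    have "(x + (\<phi> ^^ \<sigma> ord x) b) mod n = (x + b) mod n"
      using funpow_skew[OF x b, of ord] funpow_ord[OF x] funpow_ord[of "(x + b) mod n"] n_pos
      by simp
    then show ?thesis
      using mod_add_left_inj funpow_less b by blast
  qed
  then show ?thesis
    using funpow_id_iff_ord_dvd by blast
qed

lemma sigma_mod_ord:
  assumes x: "x < n"
  shows "[\<sigma> (k mod ord) x = \<sigma> k x] (mod ord)"
proof -
  have "[\<sigma> (ord * q + r) x = \<sigma> r x] (mod ord)" for q r
  proof (induction q)
    case (Suc q)
    have "\<sigma> (ord * Suc q + r) x = \<sigma> ord x + \<sigma> (ord * q + r) x"
      using sigma_add[of ord "ord * q + r" x] funpow_ord[OF x] by (simp add: add.assoc)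
    moreover have "[\<sigma> ord x = 0] (mod ord)"
      using ord_dvd_sigma_ord[OF x] by (simp add: cong_0_iff)
    ultimately show ?case
      using cong_add[OF _ Suc.IH] by fastforce
  qed simp
  from this[of "k div ord" "k mod ord"] show ?thesis
    by (simp add: cong_sym)
qed

lemma pi_zero: "[\<pi> 0 = 1] (mod ord)"
proof -
  have "\<forall>b<n. (\<phi> ^^ \<pi> 0) b = (\<phi> ^^ 1) b"
    using skew_rule[of 0] n_pos map_zero funpow_less by simp
  then show ?thesis
    using funpow_eq_iff_cong_ord by blast
qed

lemma sigma_zero: "[\<sigma> k 0 = k] (mod ord)"
proof -
  have "\<sigma> k 0 = k * \<pi> 0"
    by (simp add: \<sigma>_def funpow_zero)
  then show ?thesis
    using cong_scalar_left[OF pi_zero, of k] by simp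
qed

lemma sigma_add_point:
  assumes x: "x < n" and y: "y < n"
  shows "[\<sigma> k ((x + y) mod n) = \<sigma> (\<sigma> k x) y] (mod ord)"
proof -
  have "(\<phi> ^^ \<sigma> k ((x + y) mod n)) b = (\<phi> ^^ \<sigma> (\<sigma> k x) y) b" if b: "b < n" for b
  proof -
    define z where "z = (\<phi> ^^ k) x + (\<phi> ^^ \<sigma> k x) y"
    have "(z + (\<phi> ^^ \<sigma> k ((x + y) mod n)) b) mod n = (\<phi> ^^ k) (((x + y) mod n + b) mod n)"
      using funpow_skew[OF _ b, of "(x + y) mod n" k] funpow_skew[OF x y, of k] n_pos
      by (simp add: z_def mod_simps)
    also have "((x + y) mod n + b) mod n = (x + (y + b) mod n) mod n"
      by (simp add: mod_simps add.assoc)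
    also have "(\<phi> ^^ k) \<dots> = ((\<phi> ^^ k) x + (\<phi> ^^ \<sigma> k x) ((y + b) mod n)) mod n"
      using funpow_skew[OF x, of "(y + b) mod n" k] n_pos by simp
    also have "\<dots> = (z + (\<phi> ^^ \<sigma> (\<sigma> k x) y) b) mod n"
      using funpow_skew[OF y b, of "\<sigma> k x"] by (simp add: z_def mod_simps add.assoc)
    finally show ?thesis
      using mod_add_left_inj funpow_less b by blast
  qed
  then show ?thesis
    using funpow_eq_iff_cong_ord by blast
qed

definition generator :: nat where
  "generator = 1 mod n"

lemma generator_less: "generator < n"
  using n_pos by (simp add: generator_def)

lemma derived_eq: "derived (n, \<phi>) = (ord, \<lambda>a. \<sigma> a generator mod ord)"
  by (simp add: derived_def \<sigma>_def generator_def)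

lemma derived_apply: "\<psi> a = \<sigma> a generator mod ord"
  by (simp add: derived_eq)

lemma funpow_derived:
  assumes "j < ord"
  shows "(\<psi> ^^ k) j = \<sigma> j (k mod n) mod ord"
proof (induction k)
  case 0
  show ?case using sigma_zero[of j] assms by (simp add: cong_def)
next
  case (Suc k)
  have k: "k mod n < n"
    using n_pos by simp
  have "(\<psi> ^^ Suc k) j = \<psi> (\<sigma> j (k mod n) mod ord)"
    using Suc.IH by simp
  also have "\<dots> = \<sigma> (\<sigma> j (k mod n) mod ord) generator mod ord"
    by (rule derived_apply)
  also have "\<dots> = \<sigma> (\<sigma> j (k mod n)) generator mod ord"
    using sigma_mod_ord[OF generator_less] by (simp add: cong_def)
  also have "\<dots> = \<sigma> j ((k mod n + generator) mod n) mod ord"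
    using sigma_add_point[OF k generator_less] by (simp add: cong_def)
  also have "(k mod n + generator) mod n = Suc k mod n"
    by (simp add: generator_def mod_simps)
  finally show ?case .
qed

lemma derived_is_skew: "is_skew_morphism ord \<psi>"
proof -
  have into: "\<psi> ` {0..<ord} \<subseteq> {0..<ord}"
    using ord_pos by (auto simp: derived_apply)
  have "(\<psi> ^^ (n - 1)) (\<psi> j) = j" if "j < ord" for j
  proof -
    have "(\<psi> ^^ (n - 1)) (\<psi> j) = (\<psi> ^^ Suc (n - 1)) j"
      by (simp only: funpow_Suc_right comp_apply)
    then show ?thesis
      using funpow_derived[OF that, of n] sigma_zero[of j] that n_pos by (simp add: cong_def)
  qed
  then have "inj_on \<psi> {0..<ord}"
    by (rule inj_on_inverseI[where g = "\<psi> ^^ (n - 1)"]) simp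
  then have bij: "bij_betw \<psi> {0..<ord} {0..<ord}"
    using endo_inj_surj[OF _ into] by (simp add: bij_betw_def)
  have zero: "\<psi> 0 = 0"
    by (simp add: derived_apply \<sigma>_def)
  have rule: "\<psi> ((a + b) mod ord) = (\<psi> a + (\<psi> ^^ (\<phi> ^^ a) generator) b) mod ord"
    if b: "b < ord" for a b
  proof -
    have "(\<psi> ^^ (\<phi> ^^ a) generator) b = \<sigma> b ((\<phi> ^^ a) generator) mod ord"
      using funpow_derived[OF b] funpow_less[OF generator_less] by simp
    moreover have "\<psi> ((a + b) mod ord) = \<sigma> (a + b) generator mod ord"
      using sigma_mod_ord[OF generator_less, of "a + b"] derived_apply by (simp add: cong_def)
    ultimately show ?thesis
      using derived_apply[of a] by (simp add: sigma_add mod_simps)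
  qed
  then have "\<exists>k. \<forall>b<ord. \<psi> ((a + b) mod ord) = (\<psi> a + (\<psi> ^^ k) b) mod ord" for a
    by blast
  with ord_pos bij zero show ?thesis
    unfolding is_skew_morphism_def by (simp add: Suc_le_eq)
qed

lemma period_of_one_fixes:
  assumes one: "1 < n" and b: "b < n"
  shows "(\<phi> ^^ funpow_dist1 \<phi> 1 1) b = b"
proof -
  define d where "d = funpow_dist1 \<phi> 1 1"
  have fixes_one: "(\<phi> ^^ k) 1 = 1 \<longleftrightarrow> d dvd k" for k
    unfolding d_def using funpow_fixed_iff_dvd_funpow_dist1[OF funpow_ord[OF one] ord_pos] .
  then obtain q where q: "ord = d * q"
    using funpow_ord[OF one] by blast
  then have "d * q dvd q * \<sigma> d 1"
    using ord_dvd_sigma_ord[OF one] sigma_mult[of d 1 q] fixes_one by simp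
  moreover have "q \<noteq> 0"
    using q ord_pos by auto
  ultimately have "d dvd \<sigma> d 1"
    by (simp add: mult.commute)
  have "(\<phi> ^^ d) b = b"
    using b
  proof (induction b)
    case 0
    show ?case by (rule funpow_zero)
  next
    case (Suc b)
    then have "(\<phi> ^^ d) b = b"
      by simp
    then have "(\<phi> ^^ \<sigma> d 1) b = b"
      using funpow_mod_eq[where m = "\<sigma> d 1"] \<open>d dvd \<sigma> d 1\<close> by fastforce
    then show ?case
      using funpow_skew[OF one, of b d] fixes_one[of d] Suc.prems by simp
  qed
  then show ?thesis
    by (simp add: d_def)
qed

lemma funpow_dist1_one_less:
  assumes one: "1 < n"
  shows "funpow_dist1 \<phi> 1 1 < n"
proof -
  let ?d = "funpow_dist1 \<phi> 1 1"
  have "1 \<in> orbit \<phi> 1"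
    using funpow_ord[OF one] ord_pos by (simp add: orbit_altdef) metis
  then have inj: "inj_on (\<lambda>k. (\<phi> ^^ k) 1) {0..<?d}"
    by (rule inj_on_funpow_dist1)
  have "(\<phi> ^^ k) 1 \<noteq> 0" for k
    using inj_on_funpow[of k] funpow_zero[of k] one n_pos
    by (metis atLeastLessThan_iff inj_on_contraD zero_le zero_neq_one)
  then have "(\<lambda>k. (\<phi> ^^ k) 1) ` {0..<?d} \<subseteq> {1..<n}"
    using funpow_less[OF one] by (auto simp: Suc_le_eq)
  with inj have "card {0..<?d} \<le> card {1..<n}"
    by (metis card_inj_on_le finite_atLeastLessThan)
  then show ?thesis
    using one by simp
qed

lemma ord_less: "2 \<le> n \<Longrightarrow> ord < n"
  using ord_le[of "funpow_dist1 \<phi> 1 1"] period_of_one_fixes funpow_dist1_one_less by simp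

lemma trivial_iff_ord_eq_1: "is_trivial_perm n \<phi> \<longleftrightarrow> ord = 1"
proof
  assume "is_trivial_perm n \<phi>"
  then show "ord = 1"
    using ord_le[of 1] ord_pos by (simp add: is_trivial_perm_def)
next
  assume "ord = 1"
  then show "is_trivial_perm n \<phi>"
    using funpow_ord by (simp add: is_trivial_perm_def)
qed

lemma trivial_imp_automorphism: "is_trivial_perm n \<phi> \<Longrightarrow> is_automorphism n \<phi>"
  using n_pos bij_betw_carrier by (simp add: is_trivial_perm_def is_automorphism_def mod_simps)

lemma automorphism_imp_derived_trivial:
  assumes "is_automorphism n \<phi>"
  shows "is_trivial_perm ord \<psi>"
proof -
  have "[\<pi> a = 1] (mod ord)" if a: "a < n" for a
  proof -
    have "(\<phi> ^^ \<pi> a) b = (\<phi> ^^ 1) b" if b: "b < n" for b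
    proof -
      have "(\<phi> a + (\<phi> ^^ \<pi> a) b) mod n = (\<phi> a + \<phi> b) mod n"
        using skew_rule[OF a b] assms a b by (simp add: is_automorphism_def)
      then show ?thesis
        using mod_add_left_inj funpow_less[OF b] funpow_less[OF b, of 1] by simp
    qed
    then show ?thesis
      using funpow_eq_iff_cong_ord by blast
  qed
  then have "[\<sigma> k generator = k] (mod ord)" for k
    using cong_sum[of "{..<k}" "\<lambda>i. \<pi> ((\<phi> ^^ i) generator)" "\<lambda>_. 1" ord]
      funpow_less[OF generator_less] by (simp add: \<sigma>_def)
  then show ?thesis
    by (simp add: is_trivial_perm_def derived_apply cong_def)
qed

lemma derived_trivial_imp_automorphism:
  assumes ord: "2 \<le> ord" and trivial: "is_trivial_perm ord \<psi>"
  shows "is_automorphism n \<phi>"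
proof -
  have "n \<noteq> 1"
    using ord trivial_iff_ord_eq_1 map_zero by (auto simp: is_trivial_perm_def)
  then have one: "1 < n"
    using n_pos by simp
  have "\<psi> 1 = 1"
    using trivial ord by (simp add: is_trivial_perm_def)
  then have "[\<pi> 1 = 1] (mod ord)"
    using one ord by (simp add: derived_apply \<sigma>_def generator_def cong_def)
  then have "\<forall>b<n. (\<phi> ^^ \<pi> 1) b = (\<phi> ^^ 1) b"
    using funpow_eq_iff_cong_ord by blast
  then have "\<phi> ((1 + b) mod n) = (\<phi> 1 + \<phi> b) mod n" if "b < n" for b
    using skew_rule[OF one that] that by simp
  then have linear: "\<phi> (k mod n) = k * \<phi> 1 mod n" for k
    using mod_linear_if_additive_at_one[where f = \<phi>, OF n_pos map_zero] by blast
  have "\<phi> ((a + b) mod n) = (\<phi> a + \<phi> b) mod n" if "a < n" "b < n" for a b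
    using linear[of a] linear[of b] linear[of "a + b"] that by (simp add: mod_simps distrib_right)
  then show ?thesis
    using n_pos bij_betw_carrier by (simp add: is_automorphism_def)
qed

end

definition trivial_stage :: "nat \<times> (nat \<Rightarrow> nat) \<Rightarrow> bool" where
  "trivial_stage p \<longleftrightarrow> 2 \<le> fst p \<and> is_trivial_perm (fst p) (snd p)"

lemma (in skew_morphism) trivial_stage_derived_iff:
  "trivial_stage (derived (n, \<phi>)) \<longleftrightarrow> is_automorphism n \<phi> \<and> \<not> is_trivial_perm n \<phi>"
proof -
  have "trivial_stage (derived (n, \<phi>)) \<longleftrightarrow> 2 \<le> ord \<and> is_trivial_perm ord \<psi>"
    by (simp add: trivial_stage_def derived_eq)
  moreover have "2 \<le> ord \<longleftrightarrow> \<not> is_trivial_perm n \<phi>"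
    using trivial_iff_ord_eq_1 ord_pos by auto
  ultimately show ?thesis
    using automorphism_imp_derived_trivial derived_trivial_imp_automorphism by blast
qed

lemma fst_derived: "fst (derived p) = skord (fst p) (snd p)"
  by (cases p) (simp add: derived_def)

lemma iter_derived_Suc: "iter_derived (Suc i) n \<phi> = derived (iter_derived i n \<phi>)"
  by (simp add: iter_derived_def)

lemma iter_derived_Suc_right:
  "iter_derived (Suc i) n \<phi> = iter_derived i (skord n \<phi>) (snd (derived (n, \<phi>)))"
proof -
  have "derived (n, \<phi>) = (skord n \<phi>, snd (derived (n, \<phi>)))"
    by (metis fst_derived fst_conv snd_conv prod.collapse)
  then show ?thesis
    unfolding iter_derived_def by (metis funpow_Suc_right comp_apply)
qed

lemma is_skew_morphism_iter_derived:
  "is_skew_morphism n \<phi> \<Longrightarrow>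
    is_skew_morphism (fst (iter_derived i n \<phi>)) (snd (iter_derived i n \<phi>))"
proof (induction i arbitrary: n \<phi>)
  case 0
  then show ?case by (simp add: iter_derived_def)
next
  case (Suc i)
  interpret skew_morphism n \<phi>
    using Suc.prems by (rule skew_morphism.intro)
  show ?case
    using Suc.IH[OF derived_is_skew] by (simp add: iter_derived_Suc_right)
qed

lemma ex_trivial_stage:
  "2 \<le> n \<Longrightarrow> is_skew_morphism n \<phi> \<Longrightarrow> \<exists>c. trivial_stage (iter_derived c n \<phi>)"
proof (induction n arbitrary: \<phi> rule: less_induct)
  case (less n)
  interpret skew_morphism n \<phi>
    using less.prems(2) by (rule skew_morphism.intro)
  show ?case
  proof (cases "is_trivial_perm n \<phi>")
    case True
    then have "trivial_stage (iter_derived 0 n \<phi>)"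
      using less.prems by (simp add: trivial_stage_def iter_derived_def)
    then show ?thesis ..
  next
    case False
    then have "2 \<le> ord"
      using trivial_iff_ord_eq_1 ord_pos by simp
    then obtain c where "trivial_stage (iter_derived c ord \<psi>)"
      using less.IH[OF ord_less[OF less.prems(1)] _ derived_is_skew] by blast
    then show ?thesis
      by (metis iter_derived_Suc_right)
  qed
qed

lemma complexity_eq_Least: "complexity n \<phi> = (LEAST c. trivial_stage (iter_derived c n \<phi>))"
  by (simp add: complexity_def trivial_stage_def)

lemma trivial_stage_complexity:
  "2 \<le> n \<Longrightarrow> is_skew_morphism n \<phi> \<Longrightarrow> trivial_stage (iter_derived (complexity n \<phi>) n \<phi>)"
  unfolding complexity_eq_Least using ex_trivial_stage by (rule LeastI_ex)

lemma complexity_le: "trivial_stage (iter_derived c n \<phi>) \<Longrightarrow> complexity n \<phi> \<le> c"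
  unfolding complexity_eq_Least by (rule Least_le)

lemma complexity_derived:
  assumes "2 \<le> n" "is_skew_morphism n \<phi>" "complexity n \<phi> \<noteq> 0"
  shows "complexity n \<phi> = Suc (complexity (skord n \<phi>) (snd (derived (n, \<phi>))))"
proof -
  obtain c where "trivial_stage (iter_derived c n \<phi>)"
    using ex_trivial_stage[OF assms(1,2)] ..
  moreover have "\<not> trivial_stage (iter_derived 0 n \<phi>)"
    using complexity_le assms(3) by fastforce
  ultimately show ?thesis
    unfolding complexity_eq_Least iter_derived_Suc_right[symmetric] by (rule Least_Suc)
qed

lemma auto_order_derived:
  assumes "2 \<le> n" "is_skew_morphism n \<phi>" "complexity n \<phi> \<noteq> 0"
  shows "auto_order (skord n \<phi>) (snd (derived (n, \<phi>))) = auto_order n \<phi>"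
  unfolding auto_order_def using complexity_derived[OF assms] by (simp add: iter_derived_Suc_right)

lemma iter_derived_before_complexity:
  assumes "2 \<le> n" "is_skew_morphism n \<phi>" "complexity n \<phi> = Suc k"
  shows "is_automorphism (fst (iter_derived k n \<phi>)) (snd (iter_derived k n \<phi>))"
    and "skord (fst (iter_derived k n \<phi>)) (snd (iter_derived k n \<phi>)) = auto_order n \<phi>"
proof -
  obtain m \<chi> where stage: "iter_derived k n \<phi> = (m, \<chi>)"
    by fastforce
  interpret skew_morphism m \<chi>
    using is_skew_morphism_iter_derived[OF assms(2), of k] stage by (simp add: skew_morphism_def)
  have "trivial_stage (derived (m, \<chi>))"
    using trivial_stage_complexity[OF assms(1,2)] assms(3) stage by (simp add: iter_derived_Suc)
  then show "is_automorphism (fst (iter_derived k n \<phi>)) (snd (iter_derived k n \<phi>))"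
    using trivial_stage_derived_iff stage by simp
  show "skord (fst (iter_derived k n \<phi>)) (snd (iter_derived k n \<phi>)) = auto_order n \<phi>"
    using assms(3) stage by (simp add: auto_order_def iter_derived_Suc fst_derived)
qed

lemma auto_order_ge_2: "2 \<le> n \<Longrightarrow> is_skew_morphism n \<phi> \<Longrightarrow> 2 \<le> auto_order n \<phi>"
  using trivial_stage_complexity by (simp add: auto_order_def trivial_stage_def)

lemma complexity_eq_0_iff:
  assumes "2 \<le> n" "is_skew_morphism n \<phi>"
  shows "complexity n \<phi> = 0 \<longleftrightarrow> is_trivial_perm n \<phi>"
proof
  assume "complexity n \<phi> = 0"
  then show "is_trivial_perm n \<phi>"
    using trivial_stage_complexity[OF assms] by (simp add: trivial_stage_def iter_derived_def)
next
  assume "is_trivial_perm n \<phi>"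
  then have "trivial_stage (iter_derived 0 n \<phi>)"
    using assms(1) by (simp add: trivial_stage_def iter_derived_def)
  then show "complexity n \<phi> = 0"
    using complexity_le by fastforce
qed

lemma complexity_eq_1_iff:
  assumes "2 \<le> n" "is_skew_morphism n \<phi>"
  shows "complexity n \<phi> = 1 \<longleftrightarrow> is_automorphism n \<phi> \<and> \<not> is_trivial_perm n \<phi>"
proof -
  interpret skew_morphism n \<phi>
    using assms(2) by (rule skew_morphism.intro)
  have stage_1: "trivial_stage (iter_derived 1 n \<phi>) \<longleftrightarrow> is_automorphism n \<phi> \<and> \<not> is_trivial_perm n \<phi>"
    using trivial_stage_derived_iff by (simp add: iter_derived_def)
  show ?thesis
  proof
    assume "complexity n \<phi> = 1"
    then show "is_automorphism n \<phi> \<and> \<not> is_trivial_perm n \<phi>"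
      using stage_1 trivial_stage_complexity[OF assms] by simp
  next
    assume "is_automorphism n \<phi> \<and> \<not> is_trivial_perm n \<phi>"
    then have "complexity n \<phi> \<le> 1" "complexity n \<phi> \<noteq> 0"
      using stage_1 complexity_le[of 1] complexity_eq_0_iff[OF assms] by simp_all
    then show "complexity n \<phi> = 1"
      by simp
  qed
qed

lemma proper_iff_complexity_ge_2:
  assumes "2 \<le> n" "is_skew_morphism n \<phi>"
  shows "is_proper_skew n \<phi> \<longleftrightarrow> 2 \<le> complexity n \<phi>"
proof -
  interpret skew_morphism n \<phi>
    using assms(2) by (rule skew_morphism.intro)
  have "is_automorphism n \<phi> \<longleftrightarrow> complexity n \<phi> = 0 \<or> complexity n \<phi> = 1"
    using complexity_eq_0_iff[OF assms] complexity_eq_1_iff[OF assms] trivial_imp_automorphism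
    by blast
  then show ?thesis
    using assms(2) by (auto simp: is_proper_skew_def)
qed

theorem lemma4p1:
  fixes n c m :: nat and \<phi> :: "nat \<Rightarrow> nat"
  assumes "n \<ge> 2"
    and "is_skew_morphism n \<phi>"
    and "c = complexity n \<phi>"
    and "m = auto_order n \<phi>"
  shows "(c \<ge> 0 \<and> m \<ge> 2)
    \<and> (is_trivial_perm n \<phi> \<longleftrightarrow> c = 0)
    \<and> ((is_automorphism n \<phi> \<and> \<not> is_trivial_perm n \<phi>) \<longleftrightarrow> c = 1)
    \<and> (is_proper_skew n \<phi> \<longleftrightarrow> c \<ge> 2)
    \<and> (c \<ge> 1 \<longrightarrow> complexity (skord n \<phi>) (snd (derived (n, \<phi>))) = c - 1
                    \<and> auto_order (skord n \<phi>) (snd (derived (n, \<phi>))) = m)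
    \<and> (c \<ge> 1 \<longrightarrow> is_automorphism (fst (iter_derived (c - 1) n \<phi>)) (snd (iter_derived (c - 1) n \<phi>))
                    \<and> skord (fst (iter_derived (c - 1) n \<phi>)) (snd (iter_derived (c - 1) n \<phi>)) = m)"
proof -
  have "complexity n \<phi> \<ge> 1 \<longrightarrow>
      complexity (skord n \<phi>) (snd (derived (n, \<phi>))) = complexity n \<phi> - 1
      \<and> auto_order (skord n \<phi>) (snd (derived (n, \<phi>))) = auto_order n \<phi>"
    using complexity_derived[OF assms(1,2)] auto_order_derived[OF assms(1,2)]
    by (metis diff_Suc_1 not_one_le_zero)
  moreover have "complexity n \<phi> \<ge> 1 \<longrightarrow>
      is_automorphism (fst (iter_derived (complexity n \<phi> - 1) n \<phi>))
        (snd (iter_derived (complexity n \<phi> - 1) n \<phi>))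
      \<and> skord (fst (iter_derived (complexity n \<phi> - 1) n \<phi>))
        (snd (iter_derived (complexity n \<phi> - 1) n \<phi>)) = auto_order n \<phi>"
    using iter_derived_before_complexity[OF assms(1,2)] by simp
  ultimately show ?thesis
    unfolding assms(3,4)
    using auto_order_ge_2[OF assms(1,2)] complexity_eq_0_iff[OF assms(1,2)]
      complexity_eq_1_iff[OF assms(1,2)] proper_iff_complexity_ge_2[OF assms(1,2)]
    by auto
qed

end
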